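(* Let $u_1,u_2,u_3,u_4,u_5\in\Sigma^*$ and letters $a_i,a_j,a_k\in\Sigma$ with $a_j\neq a_k$, $a_j\neq a_i$ and $a_i\neq a_k$, such that $a_k$ is not a suffix of $u_3$. Let $w=u_1a_iu_2a_ju_3a_ku_4a_iu_5$. Then there exists an element of $\mathtt{BR}(w)$ which is not rich.
   Context: $\Sigma$ is an alphabet and $\Sigma^*$ the set of finite words over it (including the empty word). For a word $w=w_1\cdots w_n$, $w^R=w_n\cdots w_1$; $w$ is a palindrome if $w=w^R$; a factor of $w$ is a word $u$ with $w=puq$. A word $w$ is rich if the number of distinct nonempty palindromic factors of $w$ equals $|w|$. The block reversal of a nonempty word $w$ is $\mathtt{BR}(w)=\{B_t\cdots B_1 : w=B_1\cdots B_t,\ t\ge1,\ \text{each } B_i \text{ nonempty}\}$. *)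

theory Defs
  imports Main
begin

definition is_palindrome :: "'a list \<Rightarrow> bool" where
  "is_palindrome w \<longleftrightarrow> w = rev w"

definition is_factor :: "'a list \<Rightarrow> 'a list \<Rightarrow> bool" where
  "is_factor u w \<longleftrightarrow> (\<exists>p q. w = p @ u @ q)"

definition pal_factors :: "'a list \<Rightarrow> 'a list set" where
  "pal_factors w = {u. u \<noteq> [] \<and> is_factor u w \<and> is_palindrome u}"

definition rich :: "'a list \<Rightarrow> bool" where
  "rich w \<longleftrightarrow> card (pal_factors w) = length w"

definition BR :: "'a list \<Rightarrow> 'a list set" where
  "BR w = {concat (rev Bs) | Bs. Bs \<noteq> [] \<and> (\<forall>B\<in>set Bs. B \<noteq> []) \<and> concat Bs = w}"

end

theory Submission
  imports Defs "HOL-Library.Sublist"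
begin

text \<open>Appending a letter to a word creates at most one new palindromic factor (a palindromic
suffix of a longer palindromic suffix is also its prefix, hence occurs earlier). So a word has at
most as many palindromic factors as letters, and factors of rich words are rich. A complete return
a M a (a not in M) that is not a palindrome is not rich: its last letter creates no new palindrome.
Write u3 = s a_i^n with s not ending in a_i, and let a_i T be the last occurrence of a_i in
u1 a_i u2 a_j s. Reversing the blocks Z1 | a_i | T | a_i^n a_k | u4 a_i | u5 creates the complete
return a_i a_k T a_i, which is not a palindrome since T ends with the last letter of a_j s.\<close>

lemma pal_factors_conv_sublist: "pal_factors w = {u. u \<noteq> [] \<and> sublist u w \<and> rev u = u}"
  unfolding pal_factors_def is_factor_def sublist_def is_palindrome_def by auto

lemma finite_pal_factors: "finite (pal_factors w)"
proof (rule finite_subset)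
  show "pal_factors w \<subseteq> set (sublists w)"
    by (auto simp: pal_factors_conv_sublist)
qed simp

lemma pal_factors_Nil: "pal_factors [] = {}"
  by (simp add: pal_factors_conv_sublist)

lemma pal_factors_rev: "pal_factors (rev w) = pal_factors w"
  by (auto simp: pal_factors_conv_sublist sublist_rev_right)

lemma palindrome_suffix_imp_prefix:
  assumes "suffix u v" "rev u = u" "rev v = v"
  shows "prefix u v"
  using assms by (simp add: suffix_to_prefix)

lemma new_pal_factor_snoc_suffix:
  assumes "u \<in> pal_factors (w @ [c]) - pal_factors w"
  shows "suffix u (w @ [c])"
  using assms by (auto simp: pal_factors_conv_sublist sublist_snoc)

lemma new_pal_factor_snoc_unique:
  assumes "u \<in> pal_factors (w @ [c]) - pal_factors w"
    and "v \<in> pal_factors (w @ [c]) - pal_factors w"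
  shows "u = v"
proof -
  have eq_if_suffix: "x = y"
    if x: "x \<in> pal_factors (w @ [c]) - pal_factors w"
      and y: "y \<in> pal_factors (w @ [c]) - pal_factors w" and "suffix x y" for x y
  proof (rule ccontr)
    assume "x \<noteq> y"
    have "prefix x y"
      using x y \<open>suffix x y\<close>
      by (intro palindrome_suffix_imp_prefix) (auto simp: pal_factors_conv_sublist)
    obtain zs where zs: "y = zs @ [c]" "suffix zs w"
      using new_pal_factor_snoc_suffix[OF y] y by (auto simp: pal_factors_conv_sublist)
    have "prefix x zs"
      using \<open>prefix x y\<close> \<open>x \<noteq> y\<close> zs(1) by simp
    then have "sublist x w"
      using zs(2) by (meson prefix_imp_sublist suffix_imp_sublist sublist_order.order.trans)
    then show False
      using x by (auto simp: pal_factors_conv_sublist)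
  qed
  then show ?thesis
    using eq_if_suffix[OF assms] eq_if_suffix[OF assms(2,1)]
      suffix_same_cases[OF assms[THEN new_pal_factor_snoc_suffix]] by auto
qed

lemma card_pal_factors_snoc: "card (pal_factors (w @ [c])) \<le> Suc (card (pal_factors w))"
proof -
  obtain u where sub: "pal_factors (w @ [c]) \<subseteq> insert u (pal_factors w)"
  proof (cases "pal_factors (w @ [c]) - pal_factors w = {}")
    case False
    then obtain u where u: "u \<in> pal_factors (w @ [c]) - pal_factors w" by blast
    have "pal_factors (w @ [c]) \<subseteq> insert u (pal_factors w)"
      using new_pal_factor_snoc_unique[OF u] by blast
    then show ?thesis by (rule that)
  qed blast
  have "card (pal_factors (w @ [c])) \<le> card (insert u (pal_factors w))"
    using sub by (intro card_mono) (simp_all add: finite_pal_factors)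
  also have "\<dots> \<le> Suc (card (pal_factors w))"
    by (simp add: card_insert_if finite_pal_factors)
  finally show ?thesis .
qed

lemma card_pal_factors_Cons: "card (pal_factors (c # w)) \<le> Suc (card (pal_factors w))"
  using card_pal_factors_snoc[of "rev w" c] by (simp add: pal_factors_rev flip: rev.simps(2))

lemma card_pal_factors_append:
  "card (pal_factors (x @ y @ z)) \<le> length x + card (pal_factors y) + length z"
proof -
  have left: "card (pal_factors (x @ v)) \<le> length x + card (pal_factors v)" for v
    by (induction x) (auto intro: le_trans[OF card_pal_factors_Cons])
  have right: "card (pal_factors (y @ z)) \<le> card (pal_factors y) + length z"
  proof (induction z rule: rev_induct)
    case (snoc c z)
    then show ?case using card_pal_factors_snoc[of "y @ z" c] by simp
  qed simp
  show ?thesis using left[of "y @ z"] right by simp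
qed

lemma card_pal_factors_le_length: "card (pal_factors w) \<le> length w"
  using card_pal_factors_append[of w "[]" "[]"] by (simp add: pal_factors_Nil)

lemma rich_sublist:
  assumes "rich w" "sublist y w"
  shows "rich y"
proof -
  obtain x z where "w = x @ y @ z" using assms(2) by (auto simp: sublist_def)
  then show ?thesis
    using assms(1) card_pal_factors_append[of x y z] card_pal_factors_le_length[of y]
    by (simp add: rich_def)
qed

lemma complete_return_not_rich:
  assumes "a \<notin> set M" "rev (a # M @ [a]) \<noteq> a # M @ [a]"
  shows "\<not> rich (a # M @ [a])"
proof -
  have "pal_factors ((a # M) @ [a]) \<subseteq> pal_factors (a # M)"
  proof
    fix u assume u: "u \<in> pal_factors ((a # M) @ [a])"
    show "u \<in> pal_factors (a # M)"
    proof (rule ccontr)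
      assume "u \<notin> pal_factors (a # M)"
      with u have "suffix u ((a # M) @ [a])"
        by (intro new_pal_factor_snoc_suffix) simp
      moreover have "u \<noteq> []" using u by (simp add: pal_factors_conv_sublist)
      ultimately obtain zs where zs: "u = zs @ [a]" "suffix zs (a # M)"
        unfolding suffix_snoc by blast
      have "rev u = u" using u by (simp add: pal_factors_conv_sublist)
      show False
      proof (cases zs)
        case Nil
        then have "u \<in> pal_factors (a # M)"
          using zs(1) by (auto simp: pal_factors_conv_sublist sublist_Cons_right)
        then show False using \<open>u \<notin> pal_factors (a # M)\<close> by contradiction
      next
        case (Cons b zs')
        have "b = a" using arg_cong[OF \<open>rev u = u\<close>, of hd] zs(1) Cons by simp
        obtain p where "a # M = p @ zs" using zs(2) by (auto simp: suffix_def)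
        then have "zs = a # M"
          using assms(1) Cons \<open>b = a\<close> by (cases p) auto
        then show False using assms(2) zs(1) \<open>rev u = u\<close> by simp
      qed
    qed
  qed
  then have "card (pal_factors (a # M @ [a])) \<le> card (pal_factors (a # M))"
    by (simp add: card_mono finite_pal_factors)
  also have "\<dots> \<le> length (a # M)" by (rule card_pal_factors_le_length)
  finally show ?thesis by (simp add: rich_def)
qed

lemma complete_return_Cons_not_rich:
  assumes "a \<notin> set T" "a \<noteq> b" "T \<noteq> []" "last T \<noteq> b"
  shows "\<not> rich (a # (b # T) @ [a])"
proof (rule complete_return_not_rich)
  show "rev (a # (b # T) @ [a]) \<noteq> a # (b # T) @ [a]"
    using assms(3,4) by (cases T rule: rev_cases) auto
  show "a \<notin> set (b # T)"
    using assms(1,2) by simp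
qed

lemma concat_rev_in_BR:
  assumes "\<exists>B \<in> set Bs. B \<noteq> []"
  shows "concat (rev Bs) \<in> BR (concat Bs)"
proof -
  let ?Bs = "filter (\<lambda>B. B \<noteq> []) Bs"
  have concat_filter: "concat (filter (\<lambda>B. B \<noteq> []) L) = concat L" for L :: "'a list list"
    by (induction L) auto
  have "concat (rev Bs) = concat (rev ?Bs)" "concat ?Bs = concat Bs"
    by (simp_all only: rev_filter concat_filter)
  moreover have "?Bs \<noteq> []" using assms by (simp add: filter_empty_conv)
  ultimately show ?thesis unfolding BR_def by force
qed

lemma split_trailing_replicate: "\<exists>s n. xs = s @ replicate n a \<and> (s = [] \<or> last s \<noteq> a)"
proof (induction xs rule: rev_induct)
  case (snoc x xs)
  then obtain s n where "xs = s @ replicate n a" "s = [] \<or> last s \<noteq> a" by blast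
  show ?case
  proof (cases "x = a")
    case True
    then have "xs @ [x] = s @ replicate (Suc n) a"
      using \<open>xs = s @ replicate n a\<close> by (simp add: replicate_append_same)
    with \<open>s = [] \<or> last s \<noteq> a\<close> show ?thesis by blast
  next
    case False
    then have "xs @ [x] = (xs @ [x]) @ replicate 0 a \<and> last (xs @ [x]) \<noteq> a" by simp
    then show ?thesis by blast
  qed
qed simp

lemma ex_not_rich_in_BR_if_notin:
  assumes "aj \<noteq> ak" "aj \<noteq> ai" "ai \<noteq> ak" "ak \<notin> set u3"
  shows "\<exists>v \<in> BR (u1 @ [ai] @ u2 @ [aj] @ u3 @ [ak] @ u4 @ [ai] @ u5). \<not> rich v"
proof -
  let ?w = "u1 @ [ai] @ u2 @ [aj] @ u3 @ [ak] @ u4 @ [ai] @ u5"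
  obtain s n where u3: "u3 = s @ replicate n ai" and s: "s = [] \<or> last s \<noteq> ai"
    using split_trailing_replicate[of u3 ai] by blast
  obtain Z1 T where Z: "u1 @ ai # u2 @ aj # s = Z1 @ ai # T" and "ai \<notin> set T"
    using split_list_last[of ai "u1 @ ai # u2 @ aj # s"] by auto
  have last_T: "last (aj # s) = last (ai # T)"
    using arg_cong[OF Z, of last] by simp
  moreover have "last (aj # s) \<noteq> ai" using s assms(2) by (cases s) auto
  ultimately have "T \<noteq> []" by auto
  moreover have "last (aj # s) \<noteq> ak"
    using assms(1,4) u3 last_in_set[of "aj # s"] by auto
  ultimately have return: "\<not> rich (ai # (ak # T) @ [ai])"
    using last_T \<open>ai \<notin> set T\<close> assms(3) by (intro complete_return_Cons_not_rich) auto
  let ?Bs = "[Z1, [ai], T, replicate n ai @ [ak], u4 @ [ai], u5]"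
  have "?w = (u1 @ ai # u2 @ aj # s) @ replicate n ai @ [ak] @ u4 @ [ai] @ u5"
    using u3 by simp
  also have "\<dots> = concat ?Bs" unfolding Z by simp
  finally have w: "?w = concat ?Bs" .
  have BR: "concat (rev ?Bs) \<in> BR ?w"
    unfolding w by (rule concat_rev_in_BR) simp
  have "concat (rev ?Bs) = (u5 @ u4 @ replicate n ai) @ (ai # (ak # T) @ [ai]) @ Z1"
    by (simp flip: replicate_append_same)
  then have "\<not> rich (concat (rev ?Bs))"
    using return by (metis rich_sublist sublist_appendI)
  with BR show ?thesis by blast
qed

theorem mainTheorem5:
  fixes u1 u2 u3 u4 u5 :: "'a list" and ai aj ak :: 'a
  assumes "aj \<noteq> ak" and "aj \<noteq> ai" and "ai \<noteq> ak"
    and "\<not> (\<exists>p. u3 = p @ [ak])"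
  shows "\<exists>v \<in> BR (u1 @ [ai] @ u2 @ [aj] @ u3 @ [ak] @ u4 @ [ai] @ u5). \<not> rich v"
proof (cases "ak \<in> set u3")
  case True
  obtain s t where "u3 = s @ ak # t" "ak \<notin> set s"
    using split_list_first[OF True] by blast
  then show ?thesis
    using ex_not_rich_in_BR_if_notin[OF assms(1-3), of s u1 u2 "t @ ak # u4" u5] by simp
next
  case False
  then show ?thesis using ex_not_rich_in_BR_if_notin[OF assms(1-3)] by blast
qed

end
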